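(* Let $M$ be the statistical manifold of the beta-logistic distributions $$p(x;\theta^1,\theta^2)=\frac{2^{1-\theta^1}\operatorname{sech}^{\theta^1}(x)\,e^{\theta^2x}}{B\left(\frac{\theta^1-\theta^2}{2},\frac{\theta^1+\theta^2}{2}\right)},\qquad x\in\mathbb{R},\quad (\theta^1,\theta^2)\in\Theta=\{\theta^1\pm\theta^2>0\},$$ equipped with its Fisher information metric. Along a curve $t\mapsto(\theta^1(t),\theta^2(t))$ in $\Theta$, write $a=\frac{\theta^1-\theta^2}{2}$, $b=\frac{\theta^1+\theta^2}{2}$, $p=\psi'(a)$, $q=\psi'(b)$, $r=\psi'(\theta^1)$, $s=\psi''(a)$, $u=\psi''(b)$, $v=\psi''(\theta^1)$, and $\mathcal{G}=pq-r(p+q)$. Then the geodesic equations $\ddot\theta^k+\Gamma^k_{ij}\dot\theta^i\dot\theta^j=0$ ($k=1,2$) of $M$ are $$\ddot\theta^1-\frac{q(4v-s)+p(4v-u)}{8\mathcal{G}}(\dot\theta^1)^2+\frac{up-sq}{4\mathcal{G}}\dot\theta^1\dot\theta^2+\frac{sq+up}{8\mathcal{G}}(\dot\theta^2)^2=0,$$ $$\ddot\theta^2+\left(\frac{q(4v-s)}{8\mathcal{G}}+\frac{(s-u)r}{4\mathcal{G}}+\frac{(u-4v)p}{8\mathcal{G}}\right)(\dot\theta^1)^2+\frac{s(q-2r)+u(p-2r)}{4\mathcal{G}}\dot\theta^1\dot\theta^2+\frac{s(2r-q)+u(p-2r)}{8\mathcal{G}}(\dot\theta^2)^2=0.$$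
   Context: $B$ is the beta function, $\psi=\Gamma'/\Gamma$ the digamma function, $\psi',\psi''$ its derivatives; dots denote $d/dt$. With $l=\ln p$ and $\partial_i=\partial/\partial\theta^i$, the Fisher metric is $g_{ij}=\mathbb{E}[\partial_il\,\partial_jl]$, $(g^{ij})$ its inverse, $\Gamma_{ijk}=\frac12(\partial_ig_{jk}+\partial_jg_{ki}-\partial_kg_{ij})$ and $\Gamma^k_{ij}=\Gamma_{ijs}g^{sk}$ are the Levi-Civita connection coefficients (summation convention). *)

theory Defs
  imports "HOL-Analysis.Analysis"
begin

definition Theta :: "(real \<times> real) set" where
  "Theta = {(t1, t2). t1 - t2 > 0 \<and> t1 + t2 > 0}"

definition sech :: "real \<Rightarrow> real" where
  "sech x = 1 / cosh x"

definition blpdf :: "real \<Rightarrow> real \<Rightarrow> real \<Rightarrow> real" where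
  "blpdf x t1 t2 =
     2 powr (1 - t1) * (sech x) powr t1 * exp (t2 * x) / Beta ((t1 - t2) / 2) ((t1 + t2) / 2)"

definition dpart :: "nat \<Rightarrow> (real \<Rightarrow> real \<Rightarrow> real) \<Rightarrow> real \<Rightarrow> real \<Rightarrow> real" where
  "dpart i f t1 t2 = (if i = 1 then deriv (\<lambda>s. f s t2) t1 else deriv (\<lambda>s. f t1 s) t2)"

definition score :: "nat \<Rightarrow> real \<Rightarrow> real \<Rightarrow> real \<Rightarrow> real" where
  "score i x t1 t2 = dpart i (\<lambda>s1 s2. ln (blpdf x s1 s2)) t1 t2"

definition fisher :: "nat \<Rightarrow> nat \<Rightarrow> real \<Rightarrow> real \<Rightarrow> real" where
  "fisher i j t1 t2 = (LINT x|lborel. blpdf x t1 t2 * score i x t1 t2 * score j x t1 t2)"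

definition fisher_inv :: "nat \<Rightarrow> nat \<Rightarrow> real \<Rightarrow> real \<Rightarrow> real" where
  "fisher_inv i j t1 t2 =
     (let d = fisher 1 1 t1 t2 * fisher 2 2 t1 t2 - fisher 1 2 t1 t2 * fisher 2 1 t1 t2 in
      if i = 1 \<and> j = 1 then fisher 2 2 t1 t2 / d
      else if i = 2 \<and> j = 2 then fisher 1 1 t1 t2 / d
      else if i = 1 then - fisher 1 2 t1 t2 / d
      else - fisher 2 1 t1 t2 / d)"

definition christ1 :: "nat \<Rightarrow> nat \<Rightarrow> nat \<Rightarrow> real \<Rightarrow> real \<Rightarrow> real" where
  "christ1 i j k t1 t2 = (1/2) * (dpart i (fisher j k) t1 t2 + dpart j (fisher k i) t1 t2
                                  - dpart k (fisher i j) t1 t2)"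

definition christ2 :: "nat \<Rightarrow> nat \<Rightarrow> nat \<Rightarrow> real \<Rightarrow> real \<Rightarrow> real" where
  "christ2 k i j t1 t2 = (\<Sum>s\<in>{1,2}. christ1 i j s t1 t2 * fisher_inv s k t1 t2)"

end

theory Submission
  imports Defs
begin

text \<open>Since \<open>sech x ^ t1 = 2 ^ t1 * exp (- t1 * ln (2 cosh x))\<close>, the beta-logistic family is an
  exponential family \<open>p = 2 exp (t1 T1 + t2 T2 - ln B(a, b))\<close> with sufficient statistics
  \<open>T1 = - ln (2 cosh x)\<close> and \<open>T2 = x\<close>; the substitution \<open>y = (1 + tanh x) / 2\<close> turns its
  normalisation into Euler's Beta integral. Differentiating \<open>\<integral> h exp (t1 T1 + t2 T2)\<close> under the
  integral sign (polynomials in \<open>ln (2 cosh x)\<close> are dominated by the kernel at a slightly smaller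
  \<open>t1\<close>) shows that the first two moments of \<open>T\<close> are derivatives of \<open>B\<close>, so the Fisher metric is the
  Hessian \<open>g_ij = \<partial>_i \<partial>_j ln B\<close> and \<open>\<Gamma>_ijk = \<partial>_i \<partial>_j \<partial>_k ln B / 2\<close>. By the chain rule through
  \<open>a\<close>, \<open>b\<close> and \<open>t1\<close> these are polygamma combinations, and inverting the \<open>2 \<times> 2\<close> metric, whose
  determinant is \<open>G / 4\<close>, gives the geodesic coefficients \<open>\<Gamma>^k_ij\<close>.\<close>

lemma tanh_artanh_real:
  fixes y :: real
  assumes "-1 < y" "y < 1"
  shows "tanh (artanh y) = y"
proof -
  have "exp (- 2 * artanh y) = (1 - y) / (1 + y)"
    using assms by (simp add: artanh_def exp_minus exp_ln inverse_eq_divide)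
  then have "tanh (artanh y) = (1 - (1 - y) / (1 + y)) / (1 + (1 - y) / (1 + y))"
    by (simp only: tanh_real_altdef)
  also have "\<dots> = y"
    using assms by (simp add: field_simps)
  finally show ?thesis .
qed

lemma range_one_plus_tanh_half: "range (\<lambda>x::real. (1 + tanh x) / 2) = {0<..<1}"
proof
  have "(1 + tanh x) / 2 \<in> {0<..<1 :: real}" for x
    using tanh_real_gt_neg1[of x] tanh_real_lt_1[of x] by simp
  then show "range (\<lambda>x::real. (1 + tanh x) / 2) \<subseteq> {0<..<1}"
    by blast
  show "{0<..<1} \<subseteq> range (\<lambda>x::real. (1 + tanh x) / 2)"
  proof
    fix y :: real
    assume "y \<in> {0<..<1}"
    then have "y = (1 + tanh (artanh (2 * y - 1))) / 2"
      by (simp add: tanh_artanh_real)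
    then show "y \<in> range (\<lambda>x::real. (1 + tanh x) / 2)"
      by blast
  qed
qed

lemma power_le_fact_mult_exp:
  fixes y :: real
  assumes "0 \<le> y"
  shows "y ^ n \<le> fact n * exp y"
proof -
  have "(\<Sum>k\<in>{n}. y ^ k /\<^sub>R fact k) \<le> (\<Sum>k. y ^ k /\<^sub>R fact k)"
    using assms by (intro sum_le_suminf summable_exp_generic) auto
  then show ?thesis
    by (simp add: exp_def field_simps)
qed

lemma has_real_derivative_integral:
  fixes f f' :: "real \<Rightarrow> 'a \<Rightarrow> real"
  assumes "0 < e"
    and integrable: "\<And>s. s \<in> ball t e \<Longrightarrow> integrable M (f s)"
    and has_deriv: "\<And>s x. s \<in> ball t e \<Longrightarrow> ((\<lambda>s. f s x) has_real_derivative f' s x) (at s)"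
    and bound: "\<And>s x. s \<in> ball t e \<Longrightarrow> \<bar>f' s x\<bar> \<le> w x"
    and "integrable M w" and "f' t \<in> borel_measurable M"
  shows "((\<lambda>s. \<integral>x. f s x \<partial>M) has_real_derivative (\<integral>x. f' t x \<partial>M)) (at t)"
proof -
  have t: "t \<in> ball t e"
    using \<open>0 < e\<close> by simp
  have "((\<lambda>s. ((\<integral>x. f s x \<partial>M) - (\<integral>x. f t x \<partial>M)) / (s - t)) \<longlongrightarrow> (\<integral>x. f' t x \<partial>M))
      (at t within ball t e)"
  proof (subst tendsto_at_iff_sequentially, intro allI impI)
    fix X :: "nat \<Rightarrow> real"
    assume X: "\<forall>n. X n \<in> ball t e - {t}" and "X \<longlonglongrightarrow> t"
    define q where "q n x = (f (X n) x - f t x) / (X n - t)" for n x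
    have "(\<lambda>n. \<integral>x. q n x \<partial>M) \<longlonglongrightarrow> (\<integral>x. f' t x \<partial>M)"
    proof (rule integral_dominated_convergence[where w = w])
      show "q n \<in> borel_measurable M" for n
        unfolding q_def using integrable[of "X n"] integrable[OF t] X
        by (auto intro!: borel_measurable_integrable)
      have "filterlim X (at t) sequentially"
        using X \<open>X \<longlonglongrightarrow> t\<close> by (auto simp: filterlim_at)
      moreover have "((\<lambda>y. (f y x - f t x) / (y - t)) \<longlongrightarrow> f' t x) (at t)" for x
        using has_deriv[OF t, of x] by (simp add: has_field_derivative_iff)
      ultimately show "AE x in M. (\<lambda>n. q n x) \<longlonglongrightarrow> f' t x"
        unfolding q_def by (intro AE_I2) (rule filterlim_compose)
      show "AE x in M. norm (q n x) \<le> w x" for n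
      proof (rule AE_I2)
        fix x
        have "norm (f (X n) x - f t x) \<le> w x * norm (X n - t)"
          by (rule field_differentiable_bound[of "ball t e"])
            (use X t in \<open>auto intro: bound has_field_derivative_at_within[OF has_deriv]\<close>)
        then show "norm (q n x) \<le> w x"
          using X by (simp add: q_def divide_le_eq)
      qed
    qed (use assms in auto)
    moreover have "(\<integral>x. q n x \<partial>M) = ((\<integral>x. f (X n) x \<partial>M) - (\<integral>x. f t x \<partial>M)) / (X n - t)" for n
      unfolding q_def using integrable[OF t] integrable[of "X n"] X by simp
    ultimately show "((\<lambda>s. ((\<integral>x. f s x \<partial>M) - (\<integral>x. f t x \<partial>M)) / (s - t)) \<circ> X)
        \<longlonglongrightarrow> (\<integral>x. f' t x \<partial>M)"
      by (simp add: o_def)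
  qed
  then show ?thesis
    using at_within_open[of t "ball t e"] t by (simp add: has_field_derivative_iff)
qed

lemma Theta_iff: "(t1, t2) \<in> Theta \<longleftrightarrow> \<bar>t2\<bar> < t1"
  by (auto simp: Theta_def)

lemma Theta_pos:
  assumes "(t1, t2) \<in> Theta"
  shows "0 < (t1 - t2) / 2" "0 < (t1 + t2) / 2" "0 < t1"
  using assms by (auto simp: Theta_def)

definition log2cosh :: "real \<Rightarrow> real" where
  "log2cosh x = ln (2 * cosh x)"

lemma log2cosh_measurable [measurable]: "log2cosh \<in> borel_measurable borel"
  unfolding log2cosh_def cosh_def by measurable

lemma abs_le_log2cosh: "\<bar>x\<bar> \<le> log2cosh x"
proof -
  have "exp \<bar>x\<bar> \<le> 2 * cosh x"
    by (cases "x \<ge> 0") (auto simp: cosh_def)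
  then show ?thesis
    unfolding log2cosh_def by (metis exp_gt_zero ln_exp ln_le_cancel_iff order_less_le_trans)
qed

lemma log2cosh_nonneg: "0 \<le> log2cosh x"
  using abs_le_log2cosh[of x] by linarith

lemma exp_log2cosh: "exp (log2cosh x) = 2 * cosh x"
  unfolding log2cosh_def by (simp add: cosh_real_pos)

lemma one_plus_tanh_eq: "(1 + tanh x) / 2 = exp (x - log2cosh x)"
proof -
  have "(1 + tanh x) / 2 = (cosh x + sinh x) / (2 * cosh x)"
    using cosh_real_pos[of x] by (simp add: tanh_def field_simps)
  then show ?thesis
    by (simp add: cosh_plus_sinh exp_diff exp_log2cosh)
qed

lemma one_minus_tanh_eq: "(1 - tanh x) / 2 = exp (- x - log2cosh x)"
proof -
  have "(1 - tanh x) / 2 = (cosh x - sinh x) / (2 * cosh x)"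
    using cosh_real_pos[of x] by (simp add: tanh_def field_simps)
  then show ?thesis
    by (simp add: cosh_minus_sinh exp_diff exp_log2cosh)
qed

definition bl_kernel :: "real \<Rightarrow> real \<Rightarrow> real \<Rightarrow> real" where
  "bl_kernel t1 t2 x = exp (t2 * x - t1 * log2cosh x)"

lemma bl_kernel_pos: "0 < bl_kernel t1 t2 x"
  by (simp add: bl_kernel_def)

lemma bl_kernel_measurable [measurable]: "bl_kernel t1 t2 \<in> borel_measurable borel"
  unfolding bl_kernel_def by measurable

lemma tanh_substitution_Beta_integrand:
  fixes a b x :: real
  defines "y \<equiv> (1 + tanh x) / 2"
  shows "\<bar>(1 - tanh x ^ 2) / 2\<bar> * (y powr (b - 1) * (1 - y) powr (a - 1)) = 2 * bl_kernel (a + b) (b - a) x"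
proof -
  have y: "y = exp (x - log2cosh x)" and y1: "1 - y = exp (- x - log2cosh x)"
    using one_plus_tanh_eq[of x] one_minus_tanh_eq[of x] by (simp_all add: y_def field_simps)
  have "(1 - tanh x ^ 2) / 2 = 2 * y * (1 - y)"
    by (simp add: y_def power2_eq_square field_simps)
  then have "\<bar>(1 - tanh x ^ 2) / 2\<bar> * (y powr (b - 1) * (1 - y) powr (a - 1))
      = 2 * (y * y powr (b - 1)) * ((1 - y) * (1 - y) powr (a - 1))"
    using y y1 by (simp add: abs_mult)
  also have "\<dots> = 2 * (exp (x - log2cosh x) * exp ((b - 1) * (x - log2cosh x)))
      * (exp (- x - log2cosh x) * exp ((a - 1) * (- x - log2cosh x)))"
    unfolding y1 unfolding y by (simp add: powr_def)
  also have "\<dots> = 2 * bl_kernel (a + b) (b - a) x"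
    by (simp add: mult_exp_exp bl_kernel_def algebra_simps)
  finally show ?thesis .
qed

lemma bl_kernel_integral:
  assumes "(t1, t2) \<in> Theta"
  shows "integrable lborel (bl_kernel t1 t2)"
    and "(\<integral>x. bl_kernel t1 t2 x \<partial>lborel) = Beta ((t1 - t2) / 2) ((t1 + t2) / 2) / 2"
proof -
  define a b where "a = (t1 - t2) / 2" and "b = (t1 + t2) / 2"
  have "0 < a" "0 < b"
    using Theta_pos[OF assms] by (simp_all add: a_def b_def)
  define f where "f y = y powr (b - 1) * (1 - y) powr (a - 1)" for y :: real
  have "(f has_integral Beta b a) {0<..<1}"
    unfolding f_def using has_integral_Beta_real[OF \<open>0 < b\<close> \<open>0 < a\<close>]
    by (simp add: has_integral_Icc_iff_Ioo)
  then have "f absolutely_integrable_on {0<..<1} \<and> integral {0<..<1} f = Beta a b"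
    by (auto simp: absolutely_integrable_on_iff_nonneg f_def integral_unique Beta_commute)
  moreover have "inj (\<lambda>x. (1 + tanh x) / 2 :: real)"
    using tanh_real_strict_mono by (auto simp: inj_def strict_mono_eq)
  moreover have "((\<lambda>x. (1 + tanh x) / 2) has_field_derivative (1 - tanh x ^ 2) / 2) (at x)" for x :: real
    by (auto intro!: derivative_eq_intros)
  ultimately have "(\<lambda>x. \<bar>(1 - tanh x ^ 2) / 2\<bar> * f ((1 + tanh x) / 2)) absolutely_integrable_on UNIV
      \<and> integral UNIV (\<lambda>x. \<bar>(1 - tanh x ^ 2) / 2\<bar> * f ((1 + tanh x) / 2)) = Beta a b"
    by (subst has_absolute_integral_change_of_variables_1') (auto simp: range_one_plus_tanh_half)
  moreover have "\<bar>(1 - tanh x ^ 2) / 2\<bar> * f ((1 + tanh x) / 2) = 2 * bl_kernel t1 t2 x" for x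
    using tanh_substitution_Beta_integrand[of x b a] by (simp add: f_def a_def b_def field_simps)
  ultimately have "(\<lambda>x. 2 * bl_kernel t1 t2 x) absolutely_integrable_on UNIV"
    and "integral UNIV (\<lambda>x. 2 * bl_kernel t1 t2 x) = Beta a b"
    by simp_all
  then have "integrable lborel (\<lambda>x. 2 * bl_kernel t1 t2 x)"
    and "(\<integral>x. 2 * bl_kernel t1 t2 x \<partial>lborel) = Beta a b"
    by (auto simp: set_integrable_def integrable_completion integral_lborel)
  then show "integrable lborel (bl_kernel t1 t2)"
    and "(\<integral>x. bl_kernel t1 t2 x \<partial>lborel) = Beta ((t1 - t2) / 2) ((t1 + t2) / 2) / 2"
    by (simp_all add: a_def b_def)
qed

definition bl_stat :: "nat \<Rightarrow> real \<Rightarrow> real" where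
  "bl_stat i x = (if i = 1 then - log2cosh x else x)"

lemma bl_stat_measurable [measurable]: "bl_stat i \<in> borel_measurable borel"
  unfolding bl_stat_def by measurable

lemma abs_bl_stat_le: "\<bar>bl_stat i x\<bar> \<le> log2cosh x"
  using abs_le_log2cosh[of x] log2cosh_nonneg[of x] by (simp add: bl_stat_def)

lemma integrable_bl_kernel_mult:
  assumes "(t1, t2) \<in> Theta" "h \<in> borel_measurable borel" "\<And>x. \<bar>h x\<bar> \<le> log2cosh x ^ n"
  shows "integrable lborel (\<lambda>x. h x * bl_kernel t1 t2 x)"
proof (rule Bochner_Integration.integrable_bound)
  define d where "d = (t1 - \<bar>t2\<bar>) / 2"
  have "0 < d" "(t1 - d, t2) \<in> Theta"
    using assms(1) by (auto simp: Theta_iff d_def field_simps)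
  define C where "C = fact n / d ^ n"
  show "integrable lborel (\<lambda>x. C * bl_kernel (t1 - d) t2 x)"
    using bl_kernel_integral(1)[OF \<open>(t1 - d, t2) \<in> Theta\<close>] by simp
  show "AE x in lborel. norm (h x * bl_kernel t1 t2 x) \<le> norm (C * bl_kernel (t1 - d) t2 x)"
  proof (rule AE_I2)
    fix x
    have "d ^ n * \<bar>h x\<bar> \<le> (d * log2cosh x) ^ n"
      using assms(3)[of x] \<open>0 < d\<close> by (simp add: mult_left_mono power_mult_distrib)
    also have "\<dots> \<le> fact n * exp (d * log2cosh x)"
      using \<open>0 < d\<close> log2cosh_nonneg[of x] by (intro power_le_fact_mult_exp) simp
    finally have "\<bar>h x\<bar> \<le> C * exp (d * log2cosh x)"
      using \<open>0 < d\<close> by (simp add: C_def field_simps)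
    then have "\<bar>h x\<bar> * bl_kernel t1 t2 x \<le> C * exp (d * log2cosh x) * bl_kernel t1 t2 x"
      by (simp add: bl_kernel_pos)
    also have "\<dots> = C * bl_kernel (t1 - d) t2 x"
      by (simp add: bl_kernel_def mult_exp_exp algebra_simps)
    finally show "norm (h x * bl_kernel t1 t2 x) \<le> norm (C * bl_kernel (t1 - d) t2 x)"
      using \<open>0 < d\<close> by (simp add: abs_mult bl_kernel_pos abs_of_pos C_def)
  qed
qed (use assms(2) in measurable)

definition coord :: "nat \<Rightarrow> real \<Rightarrow> real \<Rightarrow> real" where
  "coord i t1 t2 = (if i = 1 then t1 else t2)"

definition slice :: "nat \<Rightarrow> (real \<Rightarrow> real \<Rightarrow> 'a) \<Rightarrow> real \<Rightarrow> real \<Rightarrow> real \<Rightarrow> 'a" where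
  "slice i f t1 t2 s = (if i = 1 then f s t2 else f t1 s)"

lemma slice_coord [simp]: "slice i f t1 t2 (coord i t1 t2) = f t1 t2"
  by (simp add: slice_def coord_def)

lemma dpart_eq_deriv_slice: "dpart i f t1 t2 = deriv (slice i f t1 t2) (coord i t1 t2)"
  by (simp add: dpart_def slice_def [abs_def] coord_def)

lemma slice_in_Theta:
  assumes "(t1, t2) \<in> Theta" "\<bar>s - coord i t1 t2\<bar> < (t1 - \<bar>t2\<bar>) / 2"
  shows "slice i Pair t1 t2 s \<in> Theta"
  using assms by (auto simp: Theta_iff slice_def coord_def abs_if split: if_splits)

lemma eventually_slice_in_Theta:
  assumes "(t1, t2) \<in> Theta"
  shows "\<forall>\<^sub>F s in nhds (coord i t1 t2). slice i Pair t1 t2 s \<in> Theta"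
proof -
  have "0 < (t1 - \<bar>t2\<bar>) / 2"
    using assms by (simp add: Theta_iff)
  then show ?thesis
    unfolding eventually_nhds_metric dist_real_def using slice_in_Theta[OF assms] by blast
qed

lemma has_real_derivative_slice_cong:
  assumes "(t1, t2) \<in> Theta" and "\<And>s1 s2. (s1, s2) \<in> Theta \<Longrightarrow> f s1 s2 = g s1 s2"
    and "(slice i g t1 t2 has_real_derivative D) (at (coord i t1 t2))"
  shows "(slice i f t1 t2 has_real_derivative D) (at (coord i t1 t2))"
proof -
  have "\<forall>\<^sub>F s in nhds (coord i t1 t2). slice i f t1 t2 s = slice i g t1 t2 s"
    using eventually_slice_in_Theta[OF assms(1)]
    by eventually_elim (simp add: slice_def assms(2) split: if_splits)
  then show ?thesis
    using assms(3) DERIV_cong_ev[OF refl _ refl] by blast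
qed

lemma dpart_eqI:
  assumes "(t1, t2) \<in> Theta" and "\<And>s1 s2. (s1, s2) \<in> Theta \<Longrightarrow> f s1 s2 = g s1 s2"
    and "(slice i g t1 t2 has_real_derivative D) (at (coord i t1 t2))"
  shows "dpart i f t1 t2 = D"
  unfolding dpart_eq_deriv_slice using has_real_derivative_slice_cong[OF assms] by (rule DERIV_imp_deriv)

lemma bl_kernel_slice_le:
  assumes "\<bar>s - coord i t1 t2\<bar> < d"
  shows "slice i bl_kernel t1 t2 s x \<le> bl_kernel (t1 - d) t2 x"
proof (cases "i = 1")
  case True
  then have "- s * log2cosh x \<le> - (t1 - d) * log2cosh x"
    using assms log2cosh_nonneg[of x] by (intro mult_right_mono) (auto simp: coord_def)
  with True show ?thesis
    by (simp add: slice_def bl_kernel_def algebra_simps)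
next
  case False
  have "(s - t2) * x \<le> \<bar>s - t2\<bar> * \<bar>x\<bar>"
    by (metis abs_ge_self abs_mult)
  also have "\<dots> \<le> d * log2cosh x"
    using False assms abs_le_log2cosh[of x] by (intro mult_mono) (auto simp: coord_def)
  finally show ?thesis
    using False by (simp add: slice_def bl_kernel_def algebra_simps)
qed

lemma has_real_derivative_slice_bl_kernel:
  "((\<lambda>s. slice i bl_kernel t1 t2 s x) has_real_derivative bl_stat i x * slice i bl_kernel t1 t2 s x) (at s)"
  unfolding slice_def bl_kernel_def bl_stat_def by (auto intro!: derivative_eq_intros)

lemma has_real_derivative_bl_moment:
  assumes "(t1, t2) \<in> Theta" "h \<in> borel_measurable borel" "\<And>x. \<bar>h x\<bar> \<le> log2cosh x ^ n"
  shows "((\<lambda>s. \<integral>x. h x * slice i bl_kernel t1 t2 s x \<partial>lborel) has_real_derivative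
           (\<integral>x. bl_stat i x * h x * bl_kernel t1 t2 x \<partial>lborel)) (at (coord i t1 t2))"
proof -
  define d where "d = (t1 - \<bar>t2\<bar>) / 2"
  have "0 < d" "(t1 - d, t2) \<in> Theta"
    using assms(1) by (auto simp: Theta_iff d_def field_simps)
  have "((\<lambda>s. \<integral>x. h x * slice i bl_kernel t1 t2 s x \<partial>lborel) has_real_derivative
      (\<integral>x. bl_stat i x * h x * slice i bl_kernel t1 t2 (coord i t1 t2) x \<partial>lborel)) (at (coord i t1 t2))"
  proof (rule has_real_derivative_integral
      [where e = d and w = "\<lambda>x. log2cosh x ^ Suc n * bl_kernel (t1 - d) t2 x"])
    fix s x
    assume "s \<in> ball (coord i t1 t2) d"
    then have s: "\<bar>s - coord i t1 t2\<bar> < d"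
      by (simp add: dist_real_def abs_minus_commute)
    then have "slice i Pair t1 t2 s \<in> Theta"
      using slice_in_Theta[OF assms(1)] by (simp add: d_def)
    then show "integrable lborel (\<lambda>x. h x * slice i bl_kernel t1 t2 s x)"
      using integrable_bl_kernel_mult[OF _ assms(2,3)] by (simp add: slice_def split: if_splits)
    show "((\<lambda>s. h x * slice i bl_kernel t1 t2 s x) has_real_derivative
        bl_stat i x * h x * slice i bl_kernel t1 t2 s x) (at s)"
      using DERIV_cmult[OF has_real_derivative_slice_bl_kernel, of "h x"] by (simp add: mult_ac)
    have "\<bar>bl_stat i x\<bar> * \<bar>h x\<bar> \<le> log2cosh x * log2cosh x ^ n"
      by (intro mult_mono abs_bl_stat_le assms(3)) (simp_all add: log2cosh_nonneg)
    moreover have "0 \<le> slice i bl_kernel t1 t2 s x"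
      by (simp add: slice_def bl_kernel_pos less_imp_le)
    ultimately show "\<bar>bl_stat i x * h x * slice i bl_kernel t1 t2 s x\<bar>
        \<le> log2cosh x ^ Suc n * bl_kernel (t1 - d) t2 x"
      using bl_kernel_slice_le[OF s, of x]
      by (simp add: abs_mult mult_mono log2cosh_nonneg)
  next
    show "integrable lborel (\<lambda>x. log2cosh x ^ Suc n * bl_kernel (t1 - d) t2 x)"
      by (rule integrable_bl_kernel_mult[OF \<open>(t1 - d, t2) \<in> Theta\<close>, of _ "Suc n"])
        (auto simp: log2cosh_nonneg)
  next
    show "(\<lambda>x. bl_stat i x * h x * slice i bl_kernel t1 t2 (coord i t1 t2) x) \<in> borel_measurable lborel"
      unfolding slice_coord using assms(2) by measurable
  qed (rule \<open>0 < d\<close>)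
  then show ?thesis
    by simp
qed

definition log_beta :: "real \<Rightarrow> real \<Rightarrow> real" where
  "log_beta t1 t2 = ln_Gamma ((t1 - t2) / 2) + ln_Gamma ((t1 + t2) / 2) - ln_Gamma t1"

text \<open>The partial derivative of \<^const>\<open>log_beta\<close> along the coordinates in \<open>ks \<noteq> []\<close>, by the
  chain rule through \<open>(t1 - t2) / 2\<close>, \<open>(t1 + t2) / 2\<close> and \<open>t1\<close>.\<close>
definition log_beta_deriv :: "nat list \<Rightarrow> real \<Rightarrow> real \<Rightarrow> real" where
  "log_beta_deriv ks t1 t2 =
     (\<Prod>k\<leftarrow>ks. if k = 1 then 1 / 2 else - 1 / 2) * Polygamma (length ks - 1) ((t1 - t2) / 2)
     + (1 / 2) ^ length ks * Polygamma (length ks - 1) ((t1 + t2) / 2)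
     - (\<Prod>k\<leftarrow>ks. if k = 1 then 1 else 0) * Polygamma (length ks - 1) t1"

lemma exp_log_beta:
  assumes "(t1, t2) \<in> Theta"
  shows "exp (log_beta t1 t2) = Beta ((t1 - t2) / 2) ((t1 + t2) / 2)"
  using Theta_pos[OF assms]
  by (simp add: log_beta_def Beta_def Gamma_real_pos_exp exp_add exp_diff add_divide_distrib [symmetric])

lemma has_real_derivative_slice_log_beta:
  assumes "(t1, t2) \<in> Theta"
  shows "(slice i log_beta t1 t2 has_real_derivative log_beta_deriv [i] t1 t2) (at (coord i t1 t2))"
  using Theta_pos[OF assms]
  by (auto simp: slice_def [abs_def] coord_def log_beta_def log_beta_deriv_def field_simps
      intro!: derivative_eq_intros)

lemma has_real_derivative_slice_log_beta_deriv:
  assumes "(t1, t2) \<in> Theta" "ks \<noteq> []"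
  shows "(slice i (log_beta_deriv ks) t1 t2 has_real_derivative log_beta_deriv (i # ks) t1 t2)
           (at (coord i t1 t2))"
proof -
  have "length (i # ks) - 1 = Suc (length ks - 1)"
    using assms(2) by simp
  then show ?thesis
    using Theta_pos[OF assms(1)]
    by (auto simp: slice_def [abs_def] coord_def log_beta_deriv_def field_simps
        intro!: derivative_eq_intros dest: nonpos_Ints_nonpos)
qed

definition bl_norm :: "real \<Rightarrow> real \<Rightarrow> real" where
  "bl_norm t1 t2 = exp (log_beta t1 t2) / 2"

lemma bl_norm_pos: "0 < bl_norm t1 t2"
  by (simp add: bl_norm_def)

lemma integral_bl_kernel:
  assumes "(t1, t2) \<in> Theta"
  shows "(\<integral>x. bl_kernel t1 t2 x \<partial>lborel) = bl_norm t1 t2"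
  using bl_kernel_integral(2)[OF assms] exp_log_beta[OF assms] by (simp add: bl_norm_def)

lemma has_real_derivative_slice_bl_norm:
  assumes "(t1, t2) \<in> Theta"
  shows "(slice i bl_norm t1 t2 has_real_derivative bl_norm t1 t2 * log_beta_deriv [i] t1 t2)
           (at (coord i t1 t2))"
proof -
  have "slice i bl_norm t1 t2 = (\<lambda>s. exp (slice i log_beta t1 t2 s) / 2)"
    by (simp add: fun_eq_iff slice_def bl_norm_def)
  then show ?thesis
    by (auto intro!: derivative_eq_intros has_real_derivative_slice_log_beta[OF assms] simp: bl_norm_def)
qed

lemma bl_moment_eq_partial:
  assumes "(t1, t2) \<in> Theta" "h \<in> borel_measurable borel" "\<And>x. \<bar>h x\<bar> \<le> log2cosh x ^ n"
    and "\<And>s1 s2. (s1, s2) \<in> Theta \<Longrightarrow> (\<integral>x. h x * bl_kernel s1 s2 x \<partial>lborel) = \<Phi> s1 s2"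
    and "(slice i \<Phi> t1 t2 has_real_derivative D) (at (coord i t1 t2))"
  shows "(\<integral>x. bl_stat i x * h x * bl_kernel t1 t2 x \<partial>lborel) = D"
proof -
  have "slice i (\<lambda>s1 s2. \<integral>x. h x * bl_kernel s1 s2 x \<partial>lborel) t1 t2
      = (\<lambda>s. \<integral>x. h x * slice i bl_kernel t1 t2 s x \<partial>lborel)"
    by (simp add: fun_eq_iff slice_def)
  then have "((\<lambda>s. \<integral>x. h x * slice i bl_kernel t1 t2 s x \<partial>lborel) has_real_derivative D)
      (at (coord i t1 t2))"
    using has_real_derivative_slice_cong[OF assms(1) assms(4) assms(5)] by simp
  with has_real_derivative_bl_moment[OF assms(1-3)] show ?thesis
    by (rule DERIV_unique)
qed

lemma bl_first_moment:
  assumes "(t1, t2) \<in> Theta"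
  shows "(\<integral>x. bl_stat i x * bl_kernel t1 t2 x \<partial>lborel) = bl_norm t1 t2 * log_beta_deriv [i] t1 t2"
  using bl_moment_eq_partial[OF assms, of "\<lambda>_. 1" 0 bl_norm i]
    integral_bl_kernel has_real_derivative_slice_bl_norm[OF assms]
  by simp

lemma bl_second_moment:
  assumes "(t1, t2) \<in> Theta"
  shows "(\<integral>x. bl_stat i x * bl_stat j x * bl_kernel t1 t2 x \<partial>lborel)
           = bl_norm t1 t2 * (log_beta_deriv [i] t1 t2 * log_beta_deriv [j] t1 t2 + log_beta_deriv [i, j] t1 t2)"
proof (rule bl_moment_eq_partial[OF assms, of _ 1])
  show "\<bar>bl_stat j x\<bar> \<le> log2cosh x ^ 1" for x
    using abs_bl_stat_le by simp
  show "(\<integral>x. bl_stat j x * bl_kernel s1 s2 x \<partial>lborel) = bl_norm s1 s2 * log_beta_deriv [j] s1 s2"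
    if "(s1, s2) \<in> Theta" for s1 s2
    using bl_first_moment[OF that] .
  have "slice i (\<lambda>s1 s2. bl_norm s1 s2 * log_beta_deriv [j] s1 s2) t1 t2
      = (\<lambda>s. slice i bl_norm t1 t2 s * slice i (log_beta_deriv [j]) t1 t2 s)"
    by (simp add: fun_eq_iff slice_def)
  then show "(slice i (\<lambda>s1 s2. bl_norm s1 s2 * log_beta_deriv [j] s1 s2) t1 t2 has_real_derivative
      bl_norm t1 t2 * (log_beta_deriv [i] t1 t2 * log_beta_deriv [j] t1 t2 + log_beta_deriv [i, j] t1 t2))
      (at (coord i t1 t2))"
    using DERIV_mult[OF has_real_derivative_slice_bl_norm[OF assms]
        has_real_derivative_slice_log_beta_deriv[OF assms, of "[j]" i]]
    by (simp add: algebra_simps)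
qed simp

lemma blpdf_eq:
  assumes "(t1, t2) \<in> Theta"
  shows "blpdf x t1 t2 = bl_kernel t1 t2 x / bl_norm t1 t2"
proof -
  have "2 powr (1 - t1) * sech x powr t1 = 2 * exp (- t1 * log2cosh x)"
    using cosh_real_pos[of x]
    by (simp add: sech_def powr_def log2cosh_def ln_mult ln_div exp_diff exp_add algebra_simps)
  then have "blpdf x t1 t2 = 2 * (exp (- t1 * log2cosh x) * exp (t2 * x)) / exp (log_beta t1 t2)"
    unfolding blpdf_def exp_log_beta[OF assms] by simp
  also have "\<dots> = bl_kernel t1 t2 x / bl_norm t1 t2"
    by (simp add: mult_exp_exp bl_kernel_def bl_norm_def algebra_simps)
  finally show ?thesis .
qed

lemma ln_blpdf:
  assumes "(t1, t2) \<in> Theta"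
  shows "ln (blpdf x t1 t2) = ln 2 + t2 * x - t1 * log2cosh x - log_beta t1 t2"
  using bl_norm_pos[of t1 t2]
  by (simp add: blpdf_eq[OF assms] bl_kernel_def bl_norm_def ln_div ln_mult)

lemma score_eq:
  assumes "(t1, t2) \<in> Theta"
  shows "score i x t1 t2 = bl_stat i x - log_beta_deriv [i] t1 t2"
  unfolding score_def
proof (rule dpart_eqI[OF assms ln_blpdf])
  show "(slice i (\<lambda>s1 s2. ln 2 + s2 * x - s1 * log2cosh x - log_beta s1 s2) t1 t2
      has_real_derivative bl_stat i x - log_beta_deriv [i] t1 t2) (at (coord i t1 t2))"
    using has_real_derivative_slice_log_beta[OF assms, of i]
    by (cases "i = 1") (auto simp: slice_def [abs_def] coord_def bl_stat_def intro!: derivative_eq_intros)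
qed

lemma fisher_eq:
  assumes "(t1, t2) \<in> Theta"
  shows "fisher i j t1 t2 = log_beta_deriv [i, j] t1 t2"
proof -
  define F where "F = bl_kernel t1 t2"
  define Z where "Z = bl_norm t1 t2"
  define m where "m k = log_beta_deriv [k] t1 t2" for k
  have "fisher i j t1 t2 = (\<integral>x. (bl_stat i x * bl_stat j x * F x - m j * (bl_stat i x * F x)
      - m i * (bl_stat j x * F x) + m i * m j * F x) / Z \<partial>lborel)"
    unfolding fisher_def score_eq[OF assms] blpdf_eq[OF assms] F_def Z_def m_def
    by (intro Bochner_Integration.integral_cong) (simp_all add: field_simps)
  also have "\<dots> = ((\<integral>x. bl_stat i x * bl_stat j x * F x \<partial>lborel) - m j * (\<integral>x. bl_stat i x * F x \<partial>lborel)
      - m i * (\<integral>x. bl_stat j x * F x \<partial>lborel) + m i * m j * (\<integral>x. F x \<partial>lborel)) / Z"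
  proof -
    have "\<bar>bl_stat i x * bl_stat j x\<bar> \<le> log2cosh x ^ 2" for x
      unfolding abs_mult power2_eq_square by (intro mult_mono abs_bl_stat_le) (simp_all add: log2cosh_nonneg)
    then have "integrable lborel (\<lambda>x. bl_stat i x * bl_stat j x * F x)"
      unfolding F_def by (intro integrable_bl_kernel_mult[OF assms]) simp_all
    moreover have "integrable lborel (\<lambda>x. bl_stat k x * F x)" for k
      using integrable_bl_kernel_mult[OF assms, of "bl_stat k" 1] by (simp add: F_def abs_bl_stat_le)
    moreover have "integrable lborel F"
      using bl_kernel_integral(1)[OF assms] by (simp add: F_def)
    ultimately show ?thesis
      by simp
  qed
  also have "\<dots> = log_beta_deriv [i, j] t1 t2"
    unfolding F_def Z_def m_def bl_first_moment[OF assms] bl_second_moment[OF assms]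
      integral_bl_kernel[OF assms]
    using bl_norm_pos[of t1 t2] by (simp add: field_simps)
  finally show ?thesis .
qed

lemma sum_two: "(\<Sum>i\<in>{1::nat, 2}. f i) = f 1 + f 2"
  by simp

lemma dpart_fisher:
  assumes "(t1, t2) \<in> Theta"
  shows "dpart k (fisher i j) t1 t2 = log_beta_deriv [k, i, j] t1 t2"
  using has_real_derivative_slice_log_beta_deriv[OF assms, of "[i, j]" k]
  by (intro dpart_eqI[OF assms fisher_eq]) simp_all

lemma christ1_eq:
  assumes "(t1, t2) \<in> Theta"
  shows "christ1 i j k t1 t2 = log_beta_deriv [i, j, k] t1 t2 / 2"
  unfolding christ1_def dpart_fisher[OF assms] by (simp add: log_beta_deriv_def mult_ac)

theorem mainTheorem4:
  fixes T :: "real set" and t :: real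
    and th1 th2 dth1 dth2 :: "real \<Rightarrow> real" and ddth1 ddth2 :: real
  assumes "open T" and "t \<in> T"
    and "\<forall>s\<in>T. (th1 s, th2 s) \<in> Theta"
    and "\<forall>s\<in>T. (th1 has_real_derivative dth1 s) (at s)"
    and "\<forall>s\<in>T. (th2 has_real_derivative dth2 s) (at s)"
    and "(dth1 has_real_derivative ddth1) (at t)"
    and "(dth2 has_real_derivative ddth2) (at t)"
  shows "let a = (th1 t - th2 t) / 2; b = (th1 t + th2 t) / 2;
             p = Polygamma 1 a; q = Polygamma 1 b; r = Polygamma 1 (th1 t);
             s = Polygamma 2 a; u = Polygamma 2 b; v = Polygamma 2 (th1 t);
             G = p * q - r * (p + q);
             dth = (\<lambda>i::nat. if i = 1 then dth1 t else dth2 t)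
         in (ddth1 + (\<Sum>i\<in>{1,2}. \<Sum>j\<in>{1,2}. christ2 1 i j (th1 t) (th2 t) * dth i * dth j)
               = ddth1 - (q * (4 * v - s) + p * (4 * v - u)) / (8 * G) * (dth1 t)\<^sup>2
                 + (u * p - s * q) / (4 * G) * dth1 t * dth2 t
                 + (s * q + u * p) / (8 * G) * (dth2 t)\<^sup>2)
          \<and> (ddth2 + (\<Sum>i\<in>{1,2}. \<Sum>j\<in>{1,2}. christ2 2 i j (th1 t) (th2 t) * dth i * dth j)
               = ddth2 + (q * (4 * v - s) / (8 * G) + (s - u) * r / (4 * G)
                          + (u - 4 * v) * p / (8 * G)) * (dth1 t)\<^sup>2
                 + (s * (q - 2 * r) + u * (p - 2 * r)) / (4 * G) * dth1 t * dth2 t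
                 + (s * (2 * r - q) + u * (p - 2 * r)) / (8 * G) * (dth2 t)\<^sup>2)"
proof -
  have th: "(th1 t, th2 t) \<in> Theta"
    using assms(2,3) by blast
  define a b where "a = (th1 t - th2 t) / 2" and "b = (th1 t + th2 t) / 2"
  define p q r where "p = Polygamma 1 a" and "q = Polygamma 1 b" and "r = Polygamma 1 (th1 t)"
  define s u v where "s = Polygamma 2 a" and "u = Polygamma 2 b" and "v = Polygamma 2 (th1 t)"
  define G where "G = p * q - r * (p + q)"
  \<comment> \<open>\<open>c k\<close> and \<open>e k\<close> are the derivatives of \<open>a\<close> and of \<open>t1\<close> with respect to the \<open>k\<close>-th coordinate\<close>
  define c e :: "nat \<Rightarrow> real"
    where "c k = (if k = 1 then 1 / 2 else - 1 / 2)" and "e k = (if k = 1 then 1 else 0)" for k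
  have g: "log_beta_deriv [i, j] (th1 t) (th2 t) = c i * c j * p + q / 4 - e i * e j * r" for i j
    by (simp add: log_beta_deriv_def c_def e_def p_def q_def r_def a_def b_def)
  have dg: "log_beta_deriv [i, j, k] (th1 t) (th2 t) = c i * c j * c k * s + u / 8 - e i * e j * e k * v"
    for i j k
    by (simp add: log_beta_deriv_def c_def e_def s_def u_def v_def a_def b_def numeral_2_eq_2)
  have det: "log_beta_deriv [1, 1] (th1 t) (th2 t) * log_beta_deriv [2, 2] (th1 t) (th2 t)
      - log_beta_deriv [1, 2] (th1 t) (th2 t) * log_beta_deriv [2, 1] (th1 t) (th2 t) = G / 4"
    by (simp add: g c_def e_def G_def field_simps)
  show ?thesis
    unfolding Let_def christ2_def fisher_inv_def christ1_eq[OF th] fisher_eq[OF th] sum_two det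
    unfolding g dg a_def[symmetric] b_def[symmetric] p_def[symmetric] q_def[symmetric]
      r_def[symmetric] s_def[symmetric] u_def[symmetric] v_def[symmetric] G_def[symmetric]
    \<comment> \<open>if \<open>G = 0\<close>, both sides degenerate consistently through the junk value \<open>x / 0 = 0\<close>\<close>
    by (cases "G = 0")
      (simp_all add: c_def e_def divide_simps, simp_all add: G_def algebra_simps power2_eq_square)
qed

end
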